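(* Let $G$ be a graph that has a proper VPG-representation $R_V$ in a $w\times h$-grid. Then every subgraph $G'$ of $G$ has an EPG-representation $R_E$ in a $2w\times 2h$-grid. Furthermore, if every vertex-path of $R_V$ is $x$-monotone, then $R_E$ can be chosen so that every vertex-path of $R_E$ is $x$-monotone.
   Context: The $w\times h$-grid consists of all grid-points $(i,j)$ with integer coordinates $1\le i\le w$, $1\le j\le h$, and all grid-edges joining grid-points at distance $1$. A vertex-path is a path in the grid. An EPG-representation of a graph $G$ assigns to each vertex $v$ a vertex-path $\mathrm{path}(v)$ such that $(v,w)$ is an edge of $G$ if and only if $\mathrm{path}(v)$ and $\mathrm{path}(w)$ share a grid-edge. A VPG-representation of $G$ assigns to each vertex a vertex-path such that $(v,w)$ is an edge if and only if $\mathrm{path}(v)$ and $\mathrm{path}(w)$ share a grid-point. A VPG-representation is proper if (a) every grid-edge is used by at most one vertex-path, and (b) whenever a grid-point $p$ belongs to both $\mathrm{path}(v)$ and $\mathrm{path}(w)$ ($v\neq w$), one of these two vertex-paths contains the grid-edge going rightward from $p$ and the other contains the grid-edge going upward from $p$. A vertex-path is $x$-monotone if every vertical line meeting it meets it in a single interval. *)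

theory Defs
  imports "HOL-Analysis.Analysis"
begin

type_synonym gpoint = "nat \<times> nat"

definition grid_point :: "nat \<Rightarrow> nat \<Rightarrow> gpoint \<Rightarrow> bool" where
  "grid_point w h p \<longleftrightarrow> 1 \<le> fst p \<and> fst p \<le> w \<and> 1 \<le> snd p \<and> snd p \<le> h"

definition grid_adj :: "gpoint \<Rightarrow> gpoint \<Rightarrow> bool" where
  "grid_adj p q \<longleftrightarrow>
     (fst p = fst q \<and> (snd p = snd q + 1 \<or> snd q = snd p + 1)) \<or>
     (snd p = snd q \<and> (fst p = fst q + 1 \<or> fst q = fst p + 1))"

definition vertex_path :: "nat \<Rightarrow> nat \<Rightarrow> gpoint list \<Rightarrow> bool" where
  "vertex_path w h ps \<longleftrightarrow> ps \<noteq> [] \<and> distinct ps \<and> (\<forall>p\<in>set ps. grid_point w h p) \<and>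
     (\<forall>i. Suc i < length ps \<longrightarrow> grid_adj (ps ! i) (ps ! Suc i))"

definition path_edges :: "gpoint list \<Rightarrow> gpoint set set" where
  "path_edges ps = {{ps ! i, ps ! Suc i} | i. Suc i < length ps}"

definition right_edge :: "gpoint \<Rightarrow> gpoint set" where
  "right_edge p = {p, (fst p + 1, snd p)}"

definition up_edge :: "gpoint \<Rightarrow> gpoint set" where
  "up_edge p = {p, (fst p, snd p + 1)}"

definition simple_graph :: "'v set \<Rightarrow> ('v \<Rightarrow> 'v \<Rightarrow> bool) \<Rightarrow> bool" where
  "simple_graph V E \<longleftrightarrow> (\<forall>u v. E u v \<longrightarrow> u \<in> V \<and> v \<in> V \<and> u \<noteq> v \<and> E v u)"

definition subgraph :: "'v set \<Rightarrow> ('v \<Rightarrow> 'v \<Rightarrow> bool) \<Rightarrow> 'v set \<Rightarrow> ('v \<Rightarrow> 'v \<Rightarrow> bool) \<Rightarrow> bool" where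
  "subgraph V' E' V E \<longleftrightarrow> simple_graph V' E' \<and> V' \<subseteq> V \<and> (\<forall>u v. E' u v \<longrightarrow> E u v)"

definition VPG_rep :: "nat \<Rightarrow> nat \<Rightarrow> 'v set \<Rightarrow> ('v \<Rightarrow> 'v \<Rightarrow> bool) \<Rightarrow> ('v \<Rightarrow> gpoint list) \<Rightarrow> bool" where
  "VPG_rep w h V E R \<longleftrightarrow> (\<forall>v\<in>V. vertex_path w h (R v)) \<and>
     (\<forall>u\<in>V. \<forall>v\<in>V. u \<noteq> v \<longrightarrow> (E u v \<longleftrightarrow> set (R u) \<inter> set (R v) \<noteq> {}))"

definition EPG_rep :: "nat \<Rightarrow> nat \<Rightarrow> 'v set \<Rightarrow> ('v \<Rightarrow> 'v \<Rightarrow> bool) \<Rightarrow> ('v \<Rightarrow> gpoint list) \<Rightarrow> bool" where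
  "EPG_rep w h V E R \<longleftrightarrow> (\<forall>v\<in>V. vertex_path w h (R v)) \<and>
     (\<forall>u\<in>V. \<forall>v\<in>V. u \<noteq> v \<longrightarrow> (E u v \<longleftrightarrow> path_edges (R u) \<inter> path_edges (R v) \<noteq> {}))"

definition proper_VPG_rep :: "nat \<Rightarrow> nat \<Rightarrow> 'v set \<Rightarrow> ('v \<Rightarrow> 'v \<Rightarrow> bool) \<Rightarrow> ('v \<Rightarrow> gpoint list) \<Rightarrow> bool" where
  "proper_VPG_rep w h V E R \<longleftrightarrow> VPG_rep w h V E R \<and>
     (\<forall>u\<in>V. \<forall>v\<in>V. u \<noteq> v \<longrightarrow> path_edges (R u) \<inter> path_edges (R v) = {}) \<and>
     (\<forall>u\<in>V. \<forall>v\<in>V. \<forall>p. u \<noteq> v \<longrightarrow> p \<in> set (R u) \<longrightarrow> p \<in> set (R v) \<longrightarrow>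
        (right_edge p \<in> path_edges (R u) \<and> up_edge p \<in> path_edges (R v)) \<or>
        (right_edge p \<in> path_edges (R v) \<and> up_edge p \<in> path_edges (R u)))"

definition gpt :: "gpoint \<Rightarrow> real \<times> real" where
  "gpt p = (real (fst p), real (snd p))"

definition path_curve :: "gpoint list \<Rightarrow> (real \<times> real) set" where
  "path_curve ps = gpt ` set ps \<union>
     (\<Union>i\<in>{i. Suc i < length ps}. closed_segment (gpt (ps ! i)) (gpt (ps ! Suc i)))"

definition x_monotone :: "gpoint list \<Rightarrow> bool" where
  "x_monotone ps \<longleftrightarrow> (\<forall>c::real. is_interval {y::real. (c, y) \<in> path_curve ps})"

end

theory Submission
  imports Defs
begin

text \<open>Scale the grid by two, so that every grid-edge splits into two half-edges. Each vertex-path is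
  replaced by its doubled copy, except where it runs along the right edge of a grid point \<open>P\<close> at
  which the path of a neighbour runs along the up edge: there it detours around the cell to the
  upper right of \<open>P\<close>, starting with the lower half of that up edge, which the two doubled paths
  then share. In a proper representation every adjacency is realised by such a crossing, and since
  the original paths are edge-disjoint, every other half-edge and every detour edge belongs to one
  doubled path only. Neither doubling nor detours reverse the horizontal direction of a path, and a
  grid path is x-monotone exactly when its x-coordinates are monotone.\<close>

definition path_steps :: "'a list \<Rightarrow> ('a \<times> 'a) set" where
  "path_steps ps = set (zip ps (tl ps))"

lemma path_steps_simps [simp]:
  "path_steps [] = {}" "path_steps [a] = {}"
  "path_steps (a # b # r) = insert (a, b) (path_steps (b # r))"
  by (auto simp: path_steps_def)

lemma path_steps_conv_nth: "path_steps ps = (\<lambda>i. (ps ! i, ps ! Suc i)) ` {i. Suc i < length ps}"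
  by (auto simp: path_steps_def set_zip nth_tl)

lemma path_steps_in_set: "(a, b) \<in> path_steps ps \<Longrightarrow> a \<in> set ps \<and> b \<in> set ps"
  by (auto simp: path_steps_conv_nth)

lemma successively_path_steps: "successively R ps \<Longrightarrow> (a, b) \<in> path_steps ps \<Longrightarrow> R a b"
  by (auto simp: path_steps_conv_nth successively_conv_nth)

lemma path_steps_append_single:
  "path_steps (ps @ [b]) = (if ps = [] then {} else insert (last ps, b) (path_steps ps))"
  by (induction ps rule: induct_list012) auto

lemma path_steps_Cons:
  "path_steps (a # ps) = (if ps = [] then {} else insert (a, hd ps) (path_steps ps))"
  by (cases ps) auto

lemma path_steps_rev: "path_steps (rev ps) = prod.swap ` path_steps ps"
  by (induction ps) (auto simp: path_steps_append_single path_steps_Cons last_rev)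

lemma path_edges_conv_steps: "path_edges ps = (\<lambda>(a, b). {a, b}) ` path_steps ps"
  by (auto simp: path_edges_def path_steps_conv_nth)

lemma path_edges_simps:
  "path_edges [] = {}" "path_edges [a] = {}"
  "path_edges (a # b # r) = insert {a, b} (path_edges (b # r))"
  by (simp_all add: path_edges_conv_steps)

lemma path_edges_append_Cons:
  "path_edges (xs @ y # zs) = path_edges (xs @ [y]) \<union> path_edges (y # zs)"
  by (induction xs rule: induct_list012) (auto simp: path_edges_simps)

lemma mem_path_edges_iff: "e \<in> path_edges ps \<longleftrightarrow> (\<exists>(a, b)\<in>path_steps ps. e = {a, b})"
  by (auto simp: path_edges_conv_steps)

lemma vertex_path_iff:
  "vertex_path w h ps \<longleftrightarrow>
     ps \<noteq> [] \<and> distinct ps \<and> (\<forall>p\<in>set ps. grid_point w h p) \<and> successively grid_adj ps"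
  by (simp add: vertex_path_def successively_conv_nth)

lemma path_curve_conv_steps:
  "path_curve ps = gpt ` set ps \<union> (\<Union>(a, b)\<in>path_steps ps. closed_segment (gpt a) (gpt b))"
  by (simp add: path_curve_def path_steps_conv_nth)

lemma path_curve_simps:
  "path_curve [] = {}" "path_curve [a] = {gpt a}"
  "path_curve (a # b # r) = closed_segment (gpt a) (gpt b) \<union> path_curve (b # r)"
  by (auto simp: path_curve_conv_steps)

lemma path_curve_rev: "path_curve (rev ps) = path_curve ps"
  by (auto simp: path_curve_conv_steps path_steps_rev closed_segment_commute)

lemma gpt_in_path_curve: "p \<in> set ps \<Longrightarrow> gpt p \<in> path_curve ps"
  by (simp add: path_curve_conv_steps)

lemma fst_gpt [simp]: "fst (gpt p) = real (fst p)" and snd_gpt [simp]: "snd (gpt p) = real (snd p)"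
  by (simp_all add: gpt_def)

lemma mem_path_edges_in_set:
  assumes "{x, y} \<in> path_edges ps" shows "x \<in> set ps \<and> y \<in> set ps"
proof -
  obtain a b where step: "(a, b) \<in> path_steps ps" and "{x, y} = {a, b}"
    using assms by (auto simp: mem_path_edges_iff)
  then have "x \<in> {a, b}" "y \<in> {a, b}" by blast+
  then show ?thesis using path_steps_in_set[OF step] by blast
qed

section \<open>x-monotone grid paths\<close>

definition vertical_slice :: "real \<Rightarrow> (real \<times> real) set \<Rightarrow> real set" where
  "vertical_slice c S = {y. (c, y) \<in> S}"

lemma x_monotone_iff: "x_monotone ps \<longleftrightarrow> (\<forall>c. is_interval (vertical_slice c (path_curve ps)))"
  by (simp add: x_monotone_def vertical_slice_def)

lemma x_monotone_rev: "x_monotone (rev ps) \<longleftrightarrow> x_monotone ps"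
  by (simp add: x_monotone_def path_curve_rev)

lemma vertical_slice_Un: "vertical_slice c (S \<union> T) = vertical_slice c S \<union> vertical_slice c T"
  by (auto simp: vertical_slice_def)

lemma convex_vertical_slice:
  assumes "convex S" shows "convex (vertical_slice c S)"
  unfolding convex_def vertical_slice_def
proof clarify
  fix x y u v :: real
  assume "(c, x) \<in> S" "(c, y) \<in> S" "0 \<le> u" "0 \<le> v" "u + v = 1"
  then have "u *\<^sub>R (c, x) + v *\<^sub>R (c, y) \<in> S"
    using assms by (intro convexD) auto
  moreover have "u *\<^sub>R (c, x) + v *\<^sub>R (c, y) = (c, u * x + v * y)"
    using \<open>u + v = 1\<close> by (simp add: distrib_right[symmetric])
  ultimately show "(c, u *\<^sub>R x + v *\<^sub>R y) \<in> S" by simp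
qed

lemma fst_in_closed_segment:
  fixes A B :: "real \<times> real"
  assumes "p \<in> closed_segment A B" shows "fst p \<in> closed_segment (fst A) (fst B)"
  using assms by (simp add: closed_segment_linear_image[OF linear_fst])

lemma path_curve_fst_ge_hd:
  assumes "successively (\<lambda>p q. fst p \<le> fst q) ps" "z \<in> path_curve ps"
  shows "real (fst (hd ps)) \<le> fst z"
  using assms
proof (induction ps rule: induct_list012)
  case (3 a b r)
  show ?case
  proof (cases "z \<in> closed_segment (gpt a) (gpt b)")
    case True
    then show ?thesis
      using "3.prems"(1) fst_in_closed_segment[OF True] by (simp add: closed_segment_eq_real_ivl)
  next
    case False
    then show ?thesis using 3 by (fastforce simp: path_curve_simps)
  qed
qed (auto simp: path_curve_simps)

lemma is_interval_Un_real:
  fixes A B :: "real set"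
  shows "is_interval A \<Longrightarrow> is_interval B \<Longrightarrow> A \<inter> B \<noteq> {} \<Longrightarrow> is_interval (A \<union> B)"
  by (simp add: is_interval_connected_1 connected_Un)

lemma x_monotone_if_nondecreasing:
  assumes "successively (\<lambda>p q. fst p \<le> fst q) ps" shows "x_monotone ps"
  unfolding x_monotone_iff
proof
  fix c
  show "is_interval (vertical_slice c (path_curve ps))"
    using assms
  proof (induction ps rule: induct_list012)
    case (3 a b r)
    let ?S = "vertical_slice c (closed_segment (gpt a) (gpt b))"
    let ?T = "vertical_slice c (path_curve (b # r))"
    have "is_interval ?S"
      by (simp add: is_interval_convex_1 convex_vertical_slice)
    moreover have "is_interval ?T" using 3 by simp
    moreover have "?S \<inter> ?T \<noteq> {}" if nonempty: "?S \<noteq> {}" "?T \<noteq> {}"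
    proof -
      obtain y y' where "(c, y) \<in> closed_segment (gpt a) (gpt b)" "(c, y') \<in> path_curve (b # r)"
        using nonempty by (auto simp: vertical_slice_def)
      then have "c \<le> real (fst b)" "real (fst b) \<le> c"
        using "3.prems" fst_in_closed_segment path_curve_fst_ge_hd[of "b # r" "(c, y')"]
        by (fastforce simp: closed_segment_eq_real_ivl)+
      then have "real (snd b) \<in> ?S \<inter> ?T"
        using gpt_in_path_curve[of b "b # r"] by (simp add: vertical_slice_def gpt_def)
      then show ?thesis by blast
    qed
    ultimately show ?case
      using is_interval_Un_real by (cases "?S = {} \<or> ?T = {}") (auto simp: path_curve_simps vertical_slice_Un)
  qed (auto simp: path_curve_simps vertical_slice_def gpt_def is_interval_1)
qed

lemma x_monotone_if_fst_monotone:
  assumes "successively (\<lambda>p q. fst p \<le> fst q) ps \<or> successively (\<lambda>p q. fst q \<le> fst p) ps"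
  shows "x_monotone ps"
  using assms x_monotone_if_nondecreasing[of "rev ps"]
  by (auto simp: x_monotone_rev successively_rev intro: x_monotone_if_nondecreasing)

lemma snd_in_closed_segment:
  fixes A B :: "real \<times> real"
  assumes "p \<in> closed_segment A B" shows "snd p \<in> closed_segment (snd A) (snd B)"
  using assms by (simp add: closed_segment_linear_image[OF linear_snd])

lemma grid_adj_cases:
  assumes "grid_adj p q"
  obtains "fst p = fst q" "snd p \<noteq> snd q" | "snd p = snd q" "fst p \<noteq> fst q"
  using assms by (auto simp: grid_adj_def)

lemma path_curve_non_integral_vertical_line:
  assumes "successively grid_adj ps" "(c, y) \<in> path_curve ps" "c \<notin> \<nat>"
  shows "y \<in> \<nat>"
proof -
  from assms(2) consider (point) q where "(c, y) = gpt q"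
    | (segment) a b where "(a, b) \<in> path_steps ps" "(c, y) \<in> closed_segment (gpt a) (gpt b)"
    unfolding path_curve_conv_steps by blast
  then show ?thesis
  proof cases
    case point
    then show ?thesis using assms(3) by (auto simp: gpt_def)
  next
    case segment
    have "grid_adj a b" using successively_path_steps[OF assms(1) segment(1)] .
    then show ?thesis
    proof (cases rule: grid_adj_cases)
      case 1
      then show ?thesis using fst_in_closed_segment[OF segment(2)] assms(3) by simp
    next
      case 2
      then show ?thesis using snd_in_closed_segment[OF segment(2)] by simp
    qed
  qed
qed

lemma half_odd_not_Nats: "odd k \<Longrightarrow> real k / 2 \<notin> \<nat>"
proof
  assume "odd k" "real k / 2 \<in> \<nat>"
  then obtain n where "real k / 2 = real n" by (auto elim: Nats_cases)
  then have "k = 2 * n" by linarith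
  with \<open>odd k\<close> show False by simp
qed

lemma midpoint_gpt:
  "midpoint (gpt p) (gpt q) = (real (fst p + fst q) / 2, real (snd p + snd q) / 2)"
  by (simp add: midpoint_def gpt_def)

text \<open>On the vertical line through the midpoints of two horizontal steps in the same column the
  curve of a grid path has only integral heights, so an x-monotone one cannot contain both.\<close>

lemma x_monotone_horizontal_steps_same_row:
  assumes xm: "x_monotone ps" and adj: "successively grid_adj ps"
    and steps: "(a, b) \<in> path_steps ps" "(a', b') \<in> path_steps ps"
    and horizontal: "snd a = snd b" "snd a' = snd b'"
    and same_column: "fst a + fst b = fst a' + fst b'"
  shows "snd a = snd a'"
proof (rule ccontr)
  assume ne: "snd a \<noteq> snd a'"
  define c where "c = real (fst a + fst b) / 2"
  define slice where "slice = vertical_slice c (path_curve ps)"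
  have "odd (fst a + fst b)"
    using successively_path_steps[OF adj steps(1)] horizontal(1) by (auto simp: grid_adj_def)
  then have c: "c \<notin> \<nat>" unfolding c_def by (rule half_odd_not_Nats)
  have midpoint: "midpoint (gpt p) (gpt q) \<in> path_curve ps" if "(p, q) \<in> path_steps ps" for p q
    unfolding path_curve_conv_steps using that by (intro UnI2 UN_I[of "(p, q)"]) auto
  have "real (snd a) \<in> slice" "real (snd a') \<in> slice"
    using midpoint[OF steps(1)] midpoint[OF steps(2)] horizontal same_column
    by (simp_all add: midpoint_gpt slice_def vertical_slice_def c_def)
  then have "real (min (snd a) (snd a')) \<in> slice" "real (max (snd a) (snd a')) \<in> slice"
    by (simp_all add: min_def max_def)
  moreover have "real (min (snd a) (snd a')) \<le> real (2 * min (snd a) (snd a') + 1) / 2"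
    "real (2 * min (snd a) (snd a') + 1) / 2 \<le> real (max (snd a) (snd a'))"
    using ne by (auto simp: min_def max_def)
  moreover have "is_interval slice" using xm by (simp add: x_monotone_iff slice_def)
  ultimately have "real (2 * min (snd a) (snd a') + 1) / 2 \<in> slice"
    unfolding is_interval_1 by blast
  then have "real (2 * min (snd a) (snd a') + 1) / 2 \<in> \<nat>"
    using path_curve_non_integral_vertical_line[OF adj _ c] by (simp add: slice_def vertical_slice_def)
  then show False using half_odd_not_Nats[of "2 * min (snd a) (snd a') + 1"] by simp
qed

lemma path_steps_crossing_column:
  assumes "successively grid_adj ps" "p \<in> set ps" "(fst (hd ps) \<le> x) \<noteq> (fst p \<le> x)"
  shows "\<exists>(a, b)\<in>path_steps ps. {fst a, fst b} = {x, Suc x}"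
  using assms
proof (induction ps rule: induct_list012)
  case (3 a b r)
  show ?case
  proof (cases "(fst a \<le> x) = (fst b \<le> x)")
    case True
    then show ?thesis using 3 by auto
  next
    case False
    then have "{fst a, fst b} = {x, Suc x}" using "3.prems"(1) by (auto simp: grid_adj_def)
    then show ?thesis by auto
  qed
qed auto

lemma exists_less_hd_if_not_nondecreasing:
  fixes f :: "'a \<Rightarrow> 'b::linorder"
  assumes "successively (\<lambda>p q. f q \<le> f p) ps" "\<not> successively (\<lambda>p q. f p \<le> f q) ps"
  shows "\<exists>p\<in>set ps. f p < f (hd ps)"
  using assms by (induction ps rule: induct_list012) (auto simp: order.order_iff_strict)

lemma horizontal_step_not_recrossed:
  assumes "successively grid_adj (a # b # r)" "distinct (a # b # r)"
    and step: "(a', b') \<in> path_steps (b # r)" and same_gap: "{fst a', fst b'} = {fst a, fst b}"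
    and horizontal: "fst a \<noteq> fst b"
    and same_row: "snd a = snd b \<Longrightarrow> snd a' = snd b' \<Longrightarrow> fst a + fst b = fst a' + fst b' \<Longrightarrow>
      snd a = snd a'"
  shows False
proof -
  have "successively grid_adj (b # r)" using assms(1) by simp
  have "snd a = snd b" using assms(1) horizontal by (auto elim: grid_adj_cases)
  moreover have "snd a' = snd b'"
    using successively_path_steps[OF \<open>successively grid_adj (b # r)\<close> step] same_gap horizontal
    by (auto elim: grid_adj_cases simp: doubleton_eq_iff)
  moreover have "fst a + fst b = fst a' + fst b'" using same_gap by (auto simp: doubleton_eq_iff)
  ultimately have "snd a = snd a'" using same_row by simp
  then have "a = a' \<or> a = b'"
    using same_gap \<open>snd a' = snd b'\<close> by (auto simp: doubleton_eq_iff prod_eq_iff)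
  then show False using path_steps_in_set[OF step] assms(2) by auto
qed

text \<open>A grid path whose x-coordinates turn back must recross the column gap of its last horizontal
  step; in the same row, that revisits a point.\<close>

lemma fst_monotone_if_horizontal_steps_same_row:
  assumes "successively grid_adj ps" "distinct ps"
    and "\<And>a b a' b'. (a, b) \<in> path_steps ps \<Longrightarrow> (a', b') \<in> path_steps ps \<Longrightarrow>
      snd a = snd b \<Longrightarrow> snd a' = snd b' \<Longrightarrow> fst a + fst b = fst a' + fst b' \<Longrightarrow> snd a = snd a'"
  shows "successively (\<lambda>p q. fst p \<le> fst q) ps \<or> successively (\<lambda>p q. fst q \<le> fst p) ps"
  using assms
proof (induction ps rule: induct_list012)
  case (3 a b r)
  have IH: "successively (\<lambda>p q. fst p \<le> fst q) (b # r) \<or> successively (\<lambda>p q. fst q \<le> fst p) (b # r)"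
  proof (rule "3.IH"(2))
    show "successively grid_adj (b # r)" "distinct (b # r)" using "3.prems"(1,2) by auto
    show "snd a1 = snd a2"
      if "(a1, b1) \<in> path_steps (b # r)" "(a2, b2) \<in> path_steps (b # r)"
        "snd a1 = snd b1" "snd a2 = snd b2" "fst a1 + fst b1 = fst a2 + fst b2" for a1 b1 a2 b2
      using that "3.prems"(3)[of a1 b1 a2 b2] by simp
  qed
  have adj_tail: "successively grid_adj (b # r)" using "3.prems"(1) by simp
  have no_recrossing: False
    if "(a', b') \<in> path_steps (b # r)" "{fst a', fst b'} = {fst a, fst b}" "fst a \<noteq> fst b" for a' b'
    using horizontal_step_not_recrossed[OF "3.prems"(1,2) that] "3.prems"(3)[of a b a' b'] that(1)
    by simp
  consider "fst a = fst b" | "fst b = Suc (fst a)" | "fst a = Suc (fst b)"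
    using "3.prems"(1) by (auto simp: grid_adj_def)
  then show ?case
  proof cases
    case 1
    then show ?thesis using IH by auto
  next
    case 2
    show ?thesis
    proof (rule ccontr)
      assume "\<not> ?thesis"
      then obtain p where "p \<in> set (b # r)" "fst p < fst b"
        using IH 2 exists_less_hd_if_not_nondecreasing[of fst "b # r"] by auto
      with 2 obtain a' b' where "(a', b') \<in> path_steps (b # r)" "{fst a', fst b'} = {fst a, fst b}"
        using path_steps_crossing_column[OF adj_tail, of p "fst a"] by auto
      then show False using no_recrossing 2 by simp
    qed
  next
    case 3
    show ?thesis
    proof (rule ccontr)
      assume "\<not> ?thesis"
      then obtain p where "p \<in> set (b # r)" "fst b < fst p"
        using IH 3 exists_less_hd_if_not_nondecreasing[of "\<lambda>p. - int (fst p)" "b # r"] by auto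
      with 3 obtain a' b' where "(a', b') \<in> path_steps (b # r)" "{fst a', fst b'} = {fst a, fst b}"
        using path_steps_crossing_column[OF adj_tail, of p "fst b"] by (auto simp: insert_commute)
      then show False using no_recrossing 3 by simp
    qed
  qed
qed auto

lemma fst_monotone_if_x_monotone:
  assumes "x_monotone ps" "successively grid_adj ps" "distinct ps"
  shows "successively (\<lambda>p q. fst p \<le> fst q) ps \<or> successively (\<lambda>p q. fst q \<le> fst p) ps"
  using fst_monotone_if_horizontal_steps_same_row[OF assms(2,3)] x_monotone_horizontal_steps_same_row[OF assms(1,2)]
  by blast

section \<open>Doubling a path\<close>

definition right_neighbour :: "gpoint \<Rightarrow> gpoint" where
  "right_neighbour p = (fst p + 1, snd p)"

definition up_neighbour :: "gpoint \<Rightarrow> gpoint" where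
  "up_neighbour p = (fst p, snd p + 1)"

lemma right_edge_eq: "right_edge p = {p, right_neighbour p}"
  by (simp add: right_edge_def right_neighbour_def)

lemma up_edge_eq: "up_edge p = {p, up_neighbour p}"
  by (simp add: up_edge_def up_neighbour_def)

text \<open>Coordinates in the doubled grid: \<open>dbl p\<close> is the image of the grid point \<open>p\<close>,
  \<open>dbl_mid p q\<close> the image of the midpoint of the grid-edge \<open>{p, q}\<close>, and \<open>dbl_center p\<close> the
  image of the center of the grid cell whose lower left corner is \<open>p\<close>. The parity of the
  coordinates tells the three kinds of points apart.\<close>

definition dbl :: "gpoint \<Rightarrow> gpoint" where
  "dbl p = (2 * fst p, 2 * snd p)"

definition dbl_mid :: "gpoint \<Rightarrow> gpoint \<Rightarrow> gpoint" where
  "dbl_mid p q = (fst p + fst q, snd p + snd q)"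

definition dbl_center :: "gpoint \<Rightarrow> gpoint" where
  "dbl_center p = (2 * fst p + 1, 2 * snd p + 1)"

lemma dbl_mid_commute: "dbl_mid p q = dbl_mid q p"
  by (simp add: dbl_mid_def add.commute)

lemma dbl_inject [simp]: "dbl p = dbl q \<longleftrightarrow> p = q"
  by (auto simp: dbl_def prod_eq_iff)

lemma dbl_center_inject [simp]: "dbl_center p = dbl_center q \<longleftrightarrow> p = q"
  by (auto simp: dbl_center_def prod_eq_iff)

lemma dbl_ne_dbl_center [simp]: "dbl p \<noteq> dbl_center q" "dbl_center q \<noteq> dbl p"
  by (auto simp: dbl_def dbl_center_def prod_eq_iff) presburger+

lemma odd_dbl_mid: "grid_adj p q \<Longrightarrow> odd (fst (dbl_mid p q) + snd (dbl_mid p q))"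
  by (auto simp: grid_adj_def dbl_mid_def)

lemma dbl_mid_ne [simp]:
  assumes "grid_adj p q"
  shows "dbl x \<noteq> dbl_mid p q" "dbl_mid p q \<noteq> dbl x"
    "dbl_center x \<noteq> dbl_mid p q" "dbl_mid p q \<noteq> dbl_center x"
proof -
  have "odd (fst (dbl_mid p q) + snd (dbl_mid p q))" using odd_dbl_mid[OF assms] .
  moreover have "even (fst (dbl x) + snd (dbl x))" "even (fst (dbl_center x) + snd (dbl_center x))"
    by (simp_all add: dbl_def dbl_center_def)
  ultimately show "dbl x \<noteq> dbl_mid p q" "dbl_mid p q \<noteq> dbl x"
    "dbl_center x \<noteq> dbl_mid p q" "dbl_mid p q \<noteq> dbl_center x"
    by metis+
qed

lemma dbl_mid_eq_imp_eq_edge: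
  assumes "grid_adj p q" "grid_adj p' q'" "dbl_mid p q = dbl_mid p' q'"
  shows "{p, q} = {p', q'}"
  using assms unfolding grid_adj_def dbl_mid_def doubleton_eq_iff prod_eq_iff
  by (elim disjE conjE; simp; presburger)

lemma grid_adj_neighbours [simp]: "grid_adj p (right_neighbour p)" "grid_adj p (up_neighbour p)"
  by (simp_all add: grid_adj_def right_neighbour_def up_neighbour_def)

lemma dbl_mid_up_inject [simp]:
  "dbl_mid p (up_neighbour p) = dbl_mid q (up_neighbour q) \<longleftrightarrow> p = q"
  by (auto simp: dbl_mid_def up_neighbour_def prod_eq_iff)

lemma right_neighbour_ne [simp]:
  "right_neighbour p \<noteq> p" "p \<noteq> right_neighbour p"
  "right_neighbour (right_neighbour p) \<noteq> p" "p \<noteq> right_neighbour (right_neighbour p)"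
  by (auto simp: right_neighbour_def prod_eq_iff)

lemma up_neighbour_ne_right [simp]:
  "up_neighbour p \<noteq> right_neighbour p" "right_neighbour p \<noteq> up_neighbour p"
  "p \<noteq> right_neighbour (up_neighbour p)" "right_neighbour (up_neighbour p) \<noteq> p"
  by (auto simp: right_neighbour_def up_neighbour_def prod_eq_iff)

text \<open>The interior points of the image of a step from \<open>p\<close> to \<open>q\<close>.\<close>

definition subdivide :: "(gpoint \<Rightarrow> bool) \<Rightarrow> gpoint \<Rightarrow> gpoint \<Rightarrow> gpoint list" where
  "subdivide F p q =
     (if q = right_neighbour p \<and> F p
      then [dbl_mid p (up_neighbour p), dbl_center p, dbl_mid p q]
      else if p = right_neighbour q \<and> F q
      then [dbl_mid p q, dbl_center q, dbl_mid q (up_neighbour q)]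
      else [dbl_mid p q])"

definition double_step :: "(gpoint \<Rightarrow> bool) \<Rightarrow> gpoint \<Rightarrow> gpoint \<Rightarrow> gpoint list" where
  "double_step F p q = dbl p # subdivide F p q @ [dbl q]"

fun double_path :: "(gpoint \<Rightarrow> bool) \<Rightarrow> gpoint list \<Rightarrow> gpoint list" where
  "double_path F [] = []"
| "double_path F [p] = [dbl p]"
| "double_path F (p # q # r) = dbl p # subdivide F p q @ double_path F (q # r)"

definition half_edge :: "gpoint \<Rightarrow> gpoint \<Rightarrow> gpoint set" where
  "half_edge p q = {dbl p, dbl_mid p q}"

definition detour_edges :: "gpoint \<Rightarrow> gpoint set set" where
  "detour_edges p =
     {half_edge p (up_neighbour p), {dbl_mid p (up_neighbour p), dbl_center p},
      {dbl_center p, dbl_mid p (right_neighbour p)}}"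

lemma double_path_Cons: "\<exists>t. double_path F (p # r) = dbl p # t"
  by (cases r) auto

lemma double_path_Cons_Cons:
  "\<exists>t. double_path F (p # q # r) = double_step F p q @ t \<and> double_path F (q # r) = dbl q # t"
  using double_path_Cons[of F q r] by (auto simp: double_step_def)

lemma set_double_path:
  "ps \<noteq> [] \<Longrightarrow>
   set (double_path F ps) = dbl ` set ps \<union> (\<Union>(p, q)\<in>path_steps ps. set (subdivide F p q))"
  by (induction F ps rule: double_path.induct) auto

lemma path_edges_double_path:
  "path_edges (double_path F ps) = (\<Union>(p, q)\<in>path_steps ps. path_edges (double_step F p q))"
proof (induction F ps rule: double_path.induct)
  case (3 F p q r)
  obtain t where "double_path F (p # q # r) = double_step F p q @ t" "double_path F (q # r) = dbl q # t"
    using double_path_Cons_Cons by blast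
  then show ?case
    using 3 path_edges_append_Cons[of "dbl p # subdivide F p q" "dbl q" t]
    by (simp add: double_step_def)
qed (auto simp: path_edges_simps)

lemma successively_append_Cons:
  "successively R (xs @ [y]) \<Longrightarrow> successively R (y # ys) \<Longrightarrow> successively R (xs @ y # ys)"
  by (auto simp: successively_append_iff)

lemma successively_double_path:
  assumes "\<And>p q. (p, q) \<in> path_steps ps \<Longrightarrow> successively R (double_step F p q)"
  shows "successively R (double_path F ps)"
  using assms
proof (induction F ps rule: double_path.induct)
  case (3 F p q r)
  obtain t where t: "double_path F (p # q # r) = double_step F p q @ t" "double_path F (q # r) = dbl q # t"
    using double_path_Cons_Cons by blast
  have "successively R (double_step F p q)" "successively R (dbl q # t)"
    using 3 t(2) by simp_all
  then show ?case
    using t(1) successively_append_Cons[of R "dbl p # subdivide F p q" "dbl q" t]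
    by (simp add: double_step_def)
qed simp_all

lemma successively_grid_adj_double_step: "grid_adj p q \<Longrightarrow> successively grid_adj (double_step F p q)"
  unfolding double_step_def subdivide_def dbl_def dbl_mid_def dbl_center_def right_neighbour_def
    up_neighbour_def grid_adj_def
  by (auto simp: prod_eq_iff)

lemma nondecreasing_double_step:
  "fst p \<le> fst q \<Longrightarrow> successively (\<lambda>x y. fst x \<le> fst y) (double_step F p q)"
  unfolding double_step_def subdivide_def dbl_def dbl_mid_def dbl_center_def right_neighbour_def
    up_neighbour_def
  by (auto simp: prod_eq_iff)

lemma nonincreasing_double_step:
  "fst q \<le> fst p \<Longrightarrow> successively (\<lambda>x y. fst y \<le> fst x) (double_step F p q)"
  unfolding double_step_def subdivide_def dbl_def dbl_mid_def dbl_center_def right_neighbour_def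
    up_neighbour_def
  by (auto simp: prod_eq_iff)

lemma path_edges_double_step_right:
  assumes "F p"
  shows "path_edges (double_step F p (right_neighbour p)) =
      detour_edges p \<union> {half_edge (right_neighbour p) p}"
    "path_edges (double_step F (right_neighbour p) p) =
      detour_edges p \<union> {half_edge (right_neighbour p) p}"
  using assms unfolding double_step_def subdivide_def detour_edges_def half_edge_def
  by (simp_all add: path_edges_simps dbl_mid_commute[of _ p] insert_commute)

lemma path_edges_double_step_plain:
  assumes "\<not> (q = right_neighbour p \<and> F p)" "\<not> (p = right_neighbour q \<and> F q)"
  shows "path_edges (double_step F p q) = {half_edge p q, half_edge q p}"
proof -
  have "subdivide F p q = [dbl_mid p q]" using assms by (simp add: subdivide_def)
  then show ?thesis
    by (simp add: double_step_def half_edge_def path_edges_simps dbl_mid_commute[of q]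
        insert_commute[of "dbl_mid _ _"])
qed

lemma path_edges_double_step_cases:
  assumes "e \<in> path_edges (double_step F p q)"
  shows "e \<in> {half_edge p q, half_edge q p} \<or>
    (\<exists>P. F P \<and> {p, q} = right_edge P \<and> e \<in> detour_edges P)"
proof -
  consider (right) "q = right_neighbour p" "F p" | (left) "p = right_neighbour q" "F q"
    | (plain) "\<not> (q = right_neighbour p \<and> F p)" "\<not> (p = right_neighbour q \<and> F q)"
    by blast
  then show ?thesis
  proof cases
    case right
    then have "e \<in> detour_edges p \<or> e = half_edge q p"
      using assms path_edges_double_step_right(1)[of F p] by auto
    moreover have "{p, q} = right_edge p" using right by (simp add: right_edge_eq)
    ultimately show ?thesis using right by blast
  next
    case left
    then have "e \<in> detour_edges q \<or> e = half_edge p q"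
      using assms path_edges_double_step_right(2)[of F q] by auto
    moreover have "{p, q} = right_edge q" using left by (simp add: right_edge_eq insert_commute)
    ultimately show ?thesis using left by blast
  next
    case plain
    then show ?thesis using assms path_edges_double_step_plain by blast
  qed
qed

lemma mem_path_edges_double_path_cases:
  assumes "successively grid_adj ps" "e \<in> path_edges (double_path F ps)"
  obtains (half) p q where "grid_adj p q" "{p, q} \<in> path_edges ps" "e = half_edge p q"
    | (detour) P where "F P" "right_edge P \<in> path_edges ps" "e \<in> detour_edges P"
proof -
  obtain p q where step: "(p, q) \<in> path_steps ps" and e: "e \<in> path_edges (double_step F p q)"
    using assms(2) by (auto simp: path_edges_double_path)
  have "grid_adj p q" "grid_adj q p"
    using successively_path_steps[OF assms(1) step] by (auto simp: grid_adj_def)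
  moreover have "{p, q} \<in> path_edges ps" "{q, p} \<in> path_edges ps"
    using step by (auto simp: mem_path_edges_iff insert_commute)
  ultimately show thesis
    using path_edges_double_step_cases[OF e] half detour by (metis insert_iff singletonD)
qed

lemma half_edge_up_mem_double_path:
  "up_edge P \<in> path_edges ps \<Longrightarrow> half_edge P (up_neighbour P) \<in> path_edges (double_path F ps)"
  "F P \<Longrightarrow> right_edge P \<in> path_edges ps \<Longrightarrow>
    half_edge P (up_neighbour P) \<in> path_edges (double_path F ps)"
proof -
  assume "up_edge P \<in> path_edges ps"
  then obtain p q where step: "(p, q) \<in> path_steps ps" and "{p, q} = {P, up_neighbour P}"
    by (auto simp: mem_path_edges_iff up_edge_eq)
  then consider "p = P" "q = up_neighbour P" | "p = up_neighbour P" "q = P"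
    by (auto simp: doubleton_eq_iff)
  then have "half_edge P (up_neighbour P) \<in> path_edges (double_step F p q)"
    by cases (simp_all add: path_edges_double_step_plain)
  then show "half_edge P (up_neighbour P) \<in> path_edges (double_path F ps)"
    using step by (auto simp: path_edges_double_path)
next
  assume "F P" "right_edge P \<in> path_edges ps"
  then obtain p q where step: "(p, q) \<in> path_steps ps" and "{p, q} = {P, right_neighbour P}"
    by (auto simp: mem_path_edges_iff right_edge_eq)
  then consider "p = P" "q = right_neighbour P" | "p = right_neighbour P" "q = P"
    by (auto simp: doubleton_eq_iff)
  then have "half_edge P (up_neighbour P) \<in> path_edges (double_step F p q)"
    by cases (simp_all add: path_edges_double_step_right[of F P, OF \<open>F P\<close>] detour_edges_def)
  then show "half_edge P (up_neighbour P) \<in> path_edges (double_path F ps)"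
    using step by (auto simp: path_edges_double_path)
qed

lemma half_edge_eq_imp_eq_edge:
  assumes "grid_adj p q" "grid_adj p' q'" "half_edge p q = half_edge p' q'"
  shows "{p, q} = {p', q'}"
proof -
  have "dbl_mid p q = dbl_mid p' q'"
    using assms by (auto simp: half_edge_def doubleton_eq_iff)
  then show ?thesis using dbl_mid_eq_imp_eq_edge assms(1,2) by blast
qed

lemma half_edge_in_detour_edges:
  assumes "grid_adj p q" "half_edge p q \<in> detour_edges P"
  shows "{p, q} = up_edge P"
proof -
  have "half_edge p q = half_edge P (up_neighbour P)"
    using assms by (auto simp: detour_edges_def half_edge_def doubleton_eq_iff)
  then show ?thesis
    using half_edge_eq_imp_eq_edge[OF assms(1)] by (simp add: up_edge_eq)
qed

lemma detour_edges_disjoint: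
  assumes "e \<in> detour_edges P" "e \<in> detour_edges P'"
  shows "P = P'"
  using assms unfolding detour_edges_def half_edge_def by (auto simp: doubleton_eq_iff)

lemma shared_edge_of_double_paths:
  assumes adj: "successively grid_adj ps" "successively grid_adj qs"
    and shared: "e \<in> path_edges (double_path F ps)" "e \<in> path_edges (double_path G qs)"
  shows "path_edges ps \<inter> path_edges qs \<noteq> {} \<or> (\<exists>P. F P \<and> up_edge P \<in> path_edges qs) \<or>
    (\<exists>P. G P \<and> up_edge P \<in> path_edges ps)"
  using adj(1) shared(1)
proof (cases rule: mem_path_edges_double_path_cases)
  case (half p q)
  note in_ps = half
  show ?thesis
    using adj(2) shared(2)
  proof (cases rule: mem_path_edges_double_path_cases)
    case (half p' q')
    then have "{p, q} = {p', q'}" using in_ps half_edge_eq_imp_eq_edge by metis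
    then have "{p, q} \<in> path_edges ps \<inter> path_edges qs" using in_ps half by simp
    then show ?thesis by blast
  next
    case (detour P)
    then have "{p, q} = up_edge P" using in_ps half_edge_in_detour_edges by metis
    then show ?thesis using in_ps detour by metis
  qed
next
  case (detour P)
  note in_ps = detour
  show ?thesis
    using adj(2) shared(2)
  proof (cases rule: mem_path_edges_double_path_cases)
    case (half p' q')
    then have "{p', q'} = up_edge P" using in_ps half_edge_in_detour_edges by metis
    then show ?thesis using in_ps half by metis
  next
    case (detour P')
    then have "P = P'" using in_ps(3) by (intro detour_edges_disjoint) simp_all
    then have "right_edge P \<in> path_edges ps \<inter> path_edges qs" using in_ps detour by simp
    then show ?thesis by blast
  qed
qed

lemma mem_subdivide_cases:
  assumes "x \<in> set (subdivide F p q)"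
  shows "x = dbl_mid p q \<or>
    (\<exists>P. F P \<and> {p, q} = right_edge P \<and> (x = dbl_mid P (up_neighbour P) \<or> x = dbl_center P))"
proof (cases "q = right_neighbour p \<and> F p")
  case right: True
  then have "x = dbl_mid p q \<or> x = dbl_mid p (up_neighbour p) \<or> x = dbl_center p"
    using assms by (auto simp: subdivide_def)
  moreover have "{p, q} = right_edge p" using right by (simp add: right_edge_eq)
  ultimately show ?thesis using right by blast
next
  case not_right: False
  show ?thesis
  proof (cases "p = right_neighbour q \<and> F q")
    case left: True
    then have "x = dbl_mid p q \<or> x = dbl_mid q (up_neighbour q) \<or> x = dbl_center q"
      using assms not_right by (auto simp: subdivide_def)
    moreover have "{p, q} = right_edge q" using left by (simp add: right_edge_eq insert_commute)
    ultimately show ?thesis using left by blast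
  next
    case False
    then have "subdivide F p q = [dbl_mid p q]"
      by (simp only: subdivide_def if_not_P[OF not_right] if_not_P[OF False] if_False)
    then show ?thesis using assms by simp
  qed
qed

lemma dbl_notin_subdivide: "grid_adj p q \<Longrightarrow> dbl x \<notin> set (subdivide F p q)"
  using mem_subdivide_cases[of "dbl x" F p q] by auto

lemma distinct_subdivide: "distinct (subdivide F p q)"
  unfolding subdivide_def dbl_mid_def dbl_center_def right_neighbour_def up_neighbour_def
  by (auto simp: prod_eq_iff)

lemma subdivide_disjoint:
  assumes adj: "grid_adj p q" "grid_adj p' q'" and ne: "{p, q} \<noteq> {p', q'}"
    and no_up: "\<And>P. F P \<Longrightarrow> up_edge P \<noteq> {p, q} \<and> up_edge P \<noteq> {p', q'}"
  shows "set (subdivide F p q) \<inter> set (subdivide F p' q') = {}"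
proof (rule ccontr)
  assume "\<not> ?thesis"
  then obtain x where x: "x \<in> set (subdivide F p q)" "x \<in> set (subdivide F p' q')" by blast
  have up_mid: "{a, b} = up_edge P" if "grid_adj a b" "dbl_mid a b = dbl_mid P (up_neighbour P)" for a b P
    using dbl_mid_eq_imp_eq_edge[OF that(1) _ that(2)] by (simp add: up_edge_eq)
  from mem_subdivide_cases[OF x(1)] show False
  proof
    assume x_mid: "x = dbl_mid p q"
    from mem_subdivide_cases[OF x(2)] show False
    proof
      assume "x = dbl_mid p' q'"
      then show False using x_mid dbl_mid_eq_imp_eq_edge[OF adj] ne by simp
    next
      assume "\<exists>P. F P \<and> {p', q'} = right_edge P \<and>
        (x = dbl_mid P (up_neighbour P) \<or> x = dbl_center P)"
      then obtain P where P: "F P" "x = dbl_mid P (up_neighbour P) \<or> x = dbl_center P" by blast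
      then have "dbl_mid p q = dbl_mid P (up_neighbour P)" using x_mid adj(1) by auto
      then show False using up_mid[OF adj(1)] no_up[OF P(1)] by simp
    qed
  next
    assume "\<exists>P. F P \<and> {p, q} = right_edge P \<and>
      (x = dbl_mid P (up_neighbour P) \<or> x = dbl_center P)"
    then obtain P where P: "F P" "{p, q} = right_edge P"
      "x = dbl_mid P (up_neighbour P) \<or> x = dbl_center P" by blast
    from mem_subdivide_cases[OF x(2)] show False
    proof
      assume "x = dbl_mid p' q'"
      then have "dbl_mid p' q' = dbl_mid P (up_neighbour P)" using P(3) adj(2) by auto
      then show False using up_mid[OF adj(2)] no_up[OF P(1)] by simp
    next
      assume "\<exists>P. F P \<and> {p', q'} = right_edge P \<and>
        (x = dbl_mid P (up_neighbour P) \<or> x = dbl_center P)"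
      then obtain P' where P': "{p', q'} = right_edge P'"
        "x = dbl_mid P' (up_neighbour P') \<or> x = dbl_center P'" by blast
      have "P = P'" using P(3) P'(2) by (elim disjE) simp_all
      then show False using P(2) P'(1) ne by simp
    qed
  qed
qed

lemma distinct_double_path:
  assumes "distinct ps" "successively grid_adj ps" "\<And>P. F P \<Longrightarrow> up_edge P \<notin> path_edges ps"
  shows "distinct (double_path F ps)"
  using assms
proof (induction F ps rule: double_path.induct)
  case (3 F p q r)
  have IH: "distinct (double_path F (q # r))"
    using "3.prems" by (intro "3.IH") (auto simp: path_edges_simps)
  have adj: "grid_adj p q" and adj_tail: "\<And>p' q'. (p', q') \<in> path_steps (q # r) \<Longrightarrow> grid_adj p' q'"
    using "3.prems"(2) successively_path_steps[of grid_adj "q # r"] by auto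
  have rest: "set (double_path F (q # r)) =
      dbl ` set (q # r) \<union> (\<Union>(p', q')\<in>path_steps (q # r). set (subdivide F p' q'))"
    by (rule set_double_path) simp
  have disjoint: "set (subdivide F p q) \<inter> set (subdivide F p' q') = {}"
    if step: "(p', q') \<in> path_steps (q # r)" for p' q'
  proof (rule subdivide_disjoint[OF adj adj_tail[OF step]])
    show "{p, q} \<noteq> {p', q'}"
      using "3.prems"(1) path_steps_in_set[OF step] by (auto simp: doubleton_eq_iff)
    show "up_edge P \<noteq> {p, q} \<and> up_edge P \<noteq> {p', q'}" if "F P" for P
      using "3.prems"(3)[OF that] step by (auto simp: path_edges_simps mem_path_edges_iff)
  qed
  have "dbl p \<notin> set (double_path F (q # r))"
    unfolding rest using "3.prems"(1) dbl_notin_subdivide[OF adj_tail] by fastforce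
  moreover have "set (subdivide F p q) \<inter> set (double_path F (q # r)) = {}"
    unfolding rest using disjoint dbl_notin_subdivide[OF adj] by fastforce
  ultimately show ?case
    using IH distinct_subdivide[of F p q] dbl_notin_subdivide[OF adj] by auto
qed auto

lemma grid_point_double_path:
  assumes "\<forall>p\<in>set ps. grid_point w h p" "successively grid_adj ps" "\<And>P. F P \<Longrightarrow> snd P < h"
    and "x \<in> set (double_path F ps)"
  shows "grid_point (2 * w) (2 * h) x"
proof -
  have "ps \<noteq> []" using assms(4) by auto
  then consider p where "p \<in> set ps" "x = dbl p"
    | p q where "(p, q) \<in> path_steps ps" "x \<in> set (subdivide F p q)"
    using assms(4) set_double_path by fastforce
  then show ?thesis
  proof cases
    case 1
    then show ?thesis using assms(1) by (auto simp: grid_point_def dbl_def)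
  next
    case 2
    have pq: "grid_point w h p" "grid_point w h q" using path_steps_in_set[OF 2(1)] assms(1) by auto
    from mem_subdivide_cases[OF 2(2)] show ?thesis
    proof
      assume "x = dbl_mid p q"
      then show ?thesis using pq by (auto simp: grid_point_def dbl_mid_def)
    next
      assume "\<exists>P. F P \<and> {p, q} = right_edge P \<and>
        (x = dbl_mid P (up_neighbour P) \<or> x = dbl_center P)"
      then obtain P where P: "F P" "{p, q} = right_edge P"
        "x = dbl_mid P (up_neighbour P) \<or> x = dbl_center P" by blast
      have "grid_point w h P" "grid_point w h (right_neighbour P)"
        using pq P(2) by (auto simp: right_edge_eq doubleton_eq_iff)
      then have "1 \<le> fst P" "fst P < w" "1 \<le> snd P" "snd P < h"
        using assms(3)[OF P(1)] by (auto simp: grid_point_def right_neighbour_def)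
      then show ?thesis
        using P(3) by (auto simp: grid_point_def dbl_mid_def dbl_center_def up_neighbour_def)
    qed
  qed
qed

lemma vertex_path_double_path:
  assumes "vertex_path w h ps"
    and "\<And>P. F P \<Longrightarrow> up_edge P \<notin> path_edges ps" "\<And>P. F P \<Longrightarrow> snd P < h"
  shows "vertex_path (2 * w) (2 * h) (double_path F ps)"
proof -
  have ps: "ps \<noteq> []" "distinct ps" "\<forall>p\<in>set ps. grid_point w h p" "successively grid_adj ps"
    using assms(1) by (simp_all add: vertex_path_iff)
  have "double_path F ps \<noteq> []"
    using ps(1) double_path_Cons[of F "hd ps" "tl ps"] by (metis list.collapse list.distinct(1))
  moreover have "successively grid_adj (double_path F ps)"
    by (rule successively_double_path, rule successively_grid_adj_double_step,
        rule successively_path_steps[OF ps(4)])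
  moreover have "\<forall>x\<in>set (double_path F ps). grid_point (2 * w) (2 * h) x"
    using grid_point_double_path[OF ps(3,4) assms(3)] by blast
  ultimately show ?thesis
    using distinct_double_path[OF ps(2,4) assms(2)] by (simp add: vertex_path_iff)
qed

lemma fst_monotone_double_path:
  assumes "successively (\<lambda>p q. fst p \<le> fst q) ps \<or> successively (\<lambda>p q. fst q \<le> fst p) ps"
  shows "successively (\<lambda>p q. fst p \<le> fst q) (double_path F ps) \<or>
    successively (\<lambda>p q. fst q \<le> fst p) (double_path F ps)"
  using assms
proof
  assume mono: "successively (\<lambda>p q. fst p \<le> fst q) ps"
  have "successively (\<lambda>p q. fst p \<le> fst q) (double_path F ps)"
    using successively_path_steps[OF mono]
    by (intro successively_double_path nondecreasing_double_step) simp
  then show ?thesis ..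
next
  assume mono: "successively (\<lambda>p q. fst q \<le> fst p) ps"
  have "successively (\<lambda>p q. fst q \<le> fst p) (double_path F ps)"
    using successively_path_steps[OF mono]
    by (intro successively_double_path nonincreasing_double_step) simp
  then show ?thesis ..
qed

lemma x_monotone_double_path:
  assumes "vertex_path w h ps" "x_monotone ps"
  shows "x_monotone (double_path F ps)"
proof -
  have "successively (\<lambda>p q. fst p \<le> fst q) ps \<or> successively (\<lambda>p q. fst q \<le> fst p) ps"
    using assms by (intro fst_monotone_if_x_monotone) (simp_all add: vertex_path_iff)
  then show ?thesis by (intro x_monotone_if_fst_monotone fst_monotone_double_path)
qed

section \<open>From a proper VPG-representation to an EPG-representation\<close>

lemma proper_VPG_repD:
  assumes "proper_VPG_rep w h V E R"
  shows "v \<in> V \<Longrightarrow> vertex_path w h (R v)"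
    and "u \<in> V \<Longrightarrow> v \<in> V \<Longrightarrow> u \<noteq> v \<Longrightarrow> E u v \<Longrightarrow> set (R u) \<inter> set (R v) \<noteq> {}"
    and "u \<in> V \<Longrightarrow> v \<in> V \<Longrightarrow> e \<in> path_edges (R u) \<Longrightarrow> e \<in> path_edges (R v) \<Longrightarrow> u = v"
    and "u \<in> V \<Longrightarrow> v \<in> V \<Longrightarrow> u \<noteq> v \<Longrightarrow> p \<in> set (R u) \<Longrightarrow> p \<in> set (R v) \<Longrightarrow>
      (right_edge p \<in> path_edges (R u) \<and> up_edge p \<in> path_edges (R v)) \<or>
      (right_edge p \<in> path_edges (R v) \<and> up_edge p \<in> path_edges (R u))"
proof -
  have vp: "\<forall>v\<in>V. vertex_path w h (R v)"
    and adj: "\<forall>u\<in>V. \<forall>v\<in>V. u \<noteq> v \<longrightarrow> (E u v \<longleftrightarrow> set (R u) \<inter> set (R v) \<noteq> {})"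
    and disjoint: "\<forall>u\<in>V. \<forall>v\<in>V. u \<noteq> v \<longrightarrow> path_edges (R u) \<inter> path_edges (R v) = {}"
    and crossing: "\<forall>u\<in>V. \<forall>v\<in>V. \<forall>p. u \<noteq> v \<longrightarrow> p \<in> set (R u) \<longrightarrow> p \<in> set (R v) \<longrightarrow>
        (right_edge p \<in> path_edges (R u) \<and> up_edge p \<in> path_edges (R v)) \<or>
        (right_edge p \<in> path_edges (R v) \<and> up_edge p \<in> path_edges (R u))"
    using assms by (simp_all add: proper_VPG_rep_def VPG_rep_def)
  show "v \<in> V \<Longrightarrow> vertex_path w h (R v)" using vp by simp
  show "u \<in> V \<Longrightarrow> v \<in> V \<Longrightarrow> u \<noteq> v \<Longrightarrow> E u v \<Longrightarrow> set (R u) \<inter> set (R v) \<noteq> {}"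
    using adj by simp
  show "u \<in> V \<Longrightarrow> v \<in> V \<Longrightarrow> e \<in> path_edges (R u) \<Longrightarrow> e \<in> path_edges (R v) \<Longrightarrow> u = v"
    using disjoint by blast
  show "u \<in> V \<Longrightarrow> v \<in> V \<Longrightarrow> u \<noteq> v \<Longrightarrow> p \<in> set (R u) \<Longrightarrow> p \<in> set (R v) \<Longrightarrow>
      (right_edge p \<in> path_edges (R u) \<and> up_edge p \<in> path_edges (R v)) \<or>
      (right_edge p \<in> path_edges (R v) \<and> up_edge p \<in> path_edges (R u))"
    using crossing by blast
qed

text \<open>In a proper representation, detours happen exactly at the crossings that realise adjacencies.\<close>

definition needs_detour :: "'v set \<Rightarrow> ('v \<Rightarrow> 'v \<Rightarrow> bool) \<Rightarrow> ('v \<Rightarrow> gpoint list) \<Rightarrow> 'v \<Rightarrow> gpoint \<Rightarrow> bool"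
  where "needs_detour V E R u P \<longleftrightarrow> (\<exists>v\<in>V. v \<noteq> u \<and> E u v \<and> up_edge P \<in> path_edges (R v))"

context
  fixes w h :: nat and V V' :: "'v set" and E E' :: "'v \<Rightarrow> 'v \<Rightarrow> bool" and R :: "'v \<Rightarrow> gpoint list"
  assumes proper: "proper_VPG_rep w h V E R" and sub: "subgraph V' E' V E"
begin

lemma vertex_path_double_path_needs_detour:
  assumes "u \<in> V'"
  shows "vertex_path (2 * w) (2 * h) (double_path (needs_detour V' E' R u) (R u))"
proof (rule vertex_path_double_path)
  have V': "V' \<subseteq> V" using sub by (simp add: subgraph_def)
  show "vertex_path w h (R u)" using proper_VPG_repD(1)[OF proper] assms V' by blast
  fix P assume "needs_detour V' E' R u P"
  then obtain v where v: "v \<in> V'" "v \<noteq> u" "up_edge P \<in> path_edges (R v)"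
    by (auto simp: needs_detour_def)
  have u_v: "u \<in> V" "v \<in> V" using assms v(1) V' by auto
  show "up_edge P \<notin> path_edges (R u)"
    using proper_VPG_repD(3)[OF proper u_v _ v(3)] v(2) by blast
  have "up_neighbour P \<in> set (R v)"
    using v(3) mem_path_edges_in_set by (simp add: up_edge_eq)
  then have "grid_point w h (up_neighbour P)"
    using proper_VPG_repD(1)[OF proper u_v(2)] by (simp add: vertex_path_iff)
  then show "snd P < h" by (simp add: grid_point_def up_neighbour_def)
qed

lemma double_paths_share_edge_if_adjacent:
  assumes u: "u \<in> V'" and v: "v \<in> V'" and "u \<noteq> v" "E' u v"
  shows "path_edges (double_path (needs_detour V' E' R u) (R u)) \<inter>
    path_edges (double_path (needs_detour V' E' R v) (R v)) \<noteq> {}"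
proof -
  have V': "V' \<subseteq> V" and E': "\<And>a b. E' a b \<Longrightarrow> E a b" and sym: "\<And>a b. E' a b \<Longrightarrow> E' b a"
    using sub by (auto simp: subgraph_def simple_graph_def)
  have uv: "u \<in> V" "v \<in> V" using u v V' by auto
  have detour_at_crossing:
    "half_edge p (up_neighbour p) \<in> path_edges (double_path (needs_detour V' E' R a) (R a)) \<inter>
       path_edges (double_path (needs_detour V' E' R b) (R b))"
    if "a \<in> V'" "b \<in> V'" "a \<noteq> b" "E' a b"
      "right_edge p \<in> path_edges (R a)" "up_edge p \<in> path_edges (R b)" for a b p
  proof -
    have "needs_detour V' E' R a p" using that by (auto simp: needs_detour_def)
    then show ?thesis using that(5,6) half_edge_up_mem_double_path by blast
  qed
  obtain p where "p \<in> set (R u)" "p \<in> set (R v)"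
    using proper_VPG_repD(2)[OF proper uv \<open>u \<noteq> v\<close> E'[OF \<open>E' u v\<close>]] by blast
  from proper_VPG_repD(4)[OF proper uv \<open>u \<noteq> v\<close> this] show ?thesis
  proof
    assume "right_edge p \<in> path_edges (R u) \<and> up_edge p \<in> path_edges (R v)"
    then show ?thesis using detour_at_crossing[OF u v \<open>u \<noteq> v\<close> \<open>E' u v\<close>] by blast
  next
    assume "right_edge p \<in> path_edges (R v) \<and> up_edge p \<in> path_edges (R u)"
    then show ?thesis
      using detour_at_crossing[OF v u _ sym[OF \<open>E' u v\<close>]] \<open>u \<noteq> v\<close> by blast
  qed
qed

lemma adjacent_if_double_paths_share_edge:
  assumes u: "u \<in> V'" and v: "v \<in> V'" and "u \<noteq> v"
    and "path_edges (double_path (needs_detour V' E' R u) (R u)) \<inter>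
      path_edges (double_path (needs_detour V' E' R v) (R v)) \<noteq> {}"
  shows "E' u v"
proof -
  have V': "V' \<subseteq> V" and sym: "\<And>a b. E' a b \<Longrightarrow> E' b a"
    using sub by (auto simp: subgraph_def simple_graph_def)
  have uv: "u \<in> V" "v \<in> V" using u v V' by auto
  have same_up_edge: "z = c"
    if "z \<in> V'" "c \<in> V'" "up_edge P \<in> path_edges (R z)" "up_edge P \<in> path_edges (R c)" for z c P
    using proper_VPG_repD(3)[OF proper, of z c] that V' by blast
  obtain e where "e \<in> path_edges (double_path (needs_detour V' E' R u) (R u))"
    "e \<in> path_edges (double_path (needs_detour V' E' R v) (R v))"
    using assms(4) by blast
  moreover have "successively grid_adj (R u)" "successively grid_adj (R v)"
    using proper_VPG_repD(1)[OF proper] uv by (auto simp: vertex_path_iff)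
  ultimately consider "path_edges (R u) \<inter> path_edges (R v) \<noteq> {}"
    | P where "needs_detour V' E' R u P" "up_edge P \<in> path_edges (R v)"
    | P where "needs_detour V' E' R v P" "up_edge P \<in> path_edges (R u)"
    using shared_edge_of_double_paths by blast
  then show "E' u v"
  proof cases
    case 1
    then show ?thesis using proper_VPG_repD(3)[OF proper uv] \<open>u \<noteq> v\<close> by blast
  next
    case (2 P)
    then obtain z where "z \<in> V'" "E' u z" "up_edge P \<in> path_edges (R z)"
      by (auto simp: needs_detour_def)
    then show ?thesis using same_up_edge[OF _ v] 2(2) by blast
  next
    case (3 P)
    then obtain z where "z \<in> V'" "E' v z" "up_edge P \<in> path_edges (R z)"
      by (auto simp: needs_detour_def)
    then show ?thesis using same_up_edge[OF _ u] 3(2) sym by blast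
  qed
qed

lemma EPG_rep_double_paths:
  "EPG_rep (2 * w) (2 * h) V' E' (\<lambda>u. double_path (needs_detour V' E' R u) (R u))"
  unfolding EPG_rep_def
  using vertex_path_double_path_needs_detour double_paths_share_edge_if_adjacent
    adjacent_if_double_paths_share_edge
  by blast

end

theorem lemma1:
  fixes V :: "'v set" and E :: "'v \<Rightarrow> 'v \<Rightarrow> bool" and RV :: "'v \<Rightarrow> gpoint list"
    and w h :: nat
  assumes "simple_graph V E"
    and "proper_VPG_rep w h V E RV"
  shows "\<forall>V' E'. subgraph V' E' V E \<longrightarrow>
           (\<exists>RE :: 'v \<Rightarrow> gpoint list. EPG_rep (2 * w) (2 * h) V' E' RE \<and>
              ((\<forall>v\<in>V. x_monotone (RV v)) \<longrightarrow> (\<forall>v\<in>V'. x_monotone (RE v))))"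
proof (intro allI impI)
  fix V' E' assume sub: "subgraph V' E' V E"
  define RE where "RE = (\<lambda>u. double_path (needs_detour V' E' RV u) (RV u))"
  have "x_monotone (RE v)" if "\<forall>v\<in>V. x_monotone (RV v)" "v \<in> V'" for v
  proof -
    have "v \<in> V" using sub that(2) by (auto simp: subgraph_def)
    then show ?thesis
      unfolding RE_def using that(1) proper_VPG_repD(1)[OF assms(2)] x_monotone_double_path by blast
  qed
  moreover have "EPG_rep (2 * w) (2 * h) V' E' RE"
    unfolding RE_def by (rule EPG_rep_double_paths[OF assms(2) sub])
  ultimately show "\<exists>RE. EPG_rep (2 * w) (2 * h) V' E' RE \<and>
      ((\<forall>v\<in>V. x_monotone (RV v)) \<longrightarrow> (\<forall>v\<in>V'. x_monotone (RE v)))"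
    by blast
qed

end
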